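(* Let $G$ be a finite simple graph with $n\ge2$ vertices and let $S_n=K_{1,n-1}$. The following are equivalent: (i) $G$ is regular; (ii) $|s(\{I(S_n)\}*\{I(G)\})|=1$; (iii) $|s(\{\rho(S_n)\}*\{I(G)\})|=1$.
   Context: Take $R=\mathbb{Z}$. An $R$-weighted complete graph $K$ is a finite vertex set with a weight $v_K(e)\in R$ on every 2-subset $e$. For such $H,G'$ with equal vertex counts and a bijection $f:V(H)\to V(G')$, $H*_fG'$ has vertex set $V(H)$ and weights $v_H(\{x,y\})v_{G'}(\{f(x),f(y)\})$; $H*G'=\{H*_fG': f \text{ bijection}\}$. $s(K)=\sum_e v_K(e)$, $s(\mathscr K)=\{s(K):K\in\mathscr K\}$. For a simple graph $G$, $I(G)$ has weight $1$ on edges and $0$ on non-edges; for connected $G$, $\rho(G)$ has weight $\rho_G(x,y)$ (graph distance) on $\{x,y\}$. *)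

theory Defs
  imports Main
begin

text \<open>An integer-weighted complete graph: a vertex set together with a weight function
  on subsets; only the weights of 2-subsets of the vertex set are relevant.\<close>
type_synonym 'a wgraph = "'a set \<times> ('a set \<Rightarrow> int)"

definition two_subsets :: "'a set \<Rightarrow> 'a set set" where
  "two_subsets V = {e. e \<subseteq> V \<and> card e = 2}"

definition wsum :: "'a wgraph \<Rightarrow> int" where
  "wsum K = (\<Sum>e\<in>two_subsets (fst K). snd K e)"

definition wprod_f :: "'a wgraph \<Rightarrow> 'b wgraph \<Rightarrow> ('a \<Rightarrow> 'b) \<Rightarrow> 'a wgraph" where
  "wprod_f H G f = (fst H, \<lambda>e. snd H e * snd G (f ` e))"

definition wprod :: "'a wgraph set \<Rightarrow> 'b wgraph set \<Rightarrow> 'a wgraph set" where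
  "wprod Hs Gs = {wprod_f H G f | H G f. H \<in> Hs \<and> G \<in> Gs \<and> bij_betw f (fst H) (fst G)}"

definition simple_graph :: "'a set \<Rightarrow> ('a \<Rightarrow> 'a \<Rightarrow> bool) \<Rightarrow> bool" where
  "simple_graph V E \<longleftrightarrow> finite V \<and> (\<forall>x y. E x y \<longrightarrow> x \<in> V \<and> y \<in> V \<and> x \<noteq> y \<and> E y x)"

definition degree :: "'a set \<Rightarrow> ('a \<Rightarrow> 'a \<Rightarrow> bool) \<Rightarrow> 'a \<Rightarrow> nat" where
  "degree V E v = card {u \<in> V. E v u}"

definition regular :: "'a set \<Rightarrow> ('a \<Rightarrow> 'a \<Rightarrow> bool) \<Rightarrow> bool" where
  "regular V E \<longleftrightarrow> (\<exists>k. \<forall>v\<in>V. degree V E v = k)"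

definition Igraph :: "'a set \<Rightarrow> ('a \<Rightarrow> 'a \<Rightarrow> bool) \<Rightarrow> 'a wgraph" where
  "Igraph V E = (V, \<lambda>e. if \<exists>x y. e = {x, y} \<and> x \<noteq> y \<and> E x y then 1 else 0)"

definition walk :: "'a set \<Rightarrow> ('a \<Rightarrow> 'a \<Rightarrow> bool) \<Rightarrow> nat \<Rightarrow> 'a \<Rightarrow> 'a \<Rightarrow> bool" where
  "walk V E k x y \<longleftrightarrow> (\<exists>p. length p = Suc k \<and> hd p = x \<and> last p = y \<and> set p \<subseteq> V
       \<and> (\<forall>i<k. E (p ! i) (p ! Suc i)))"

definition connected_graph :: "'a set \<Rightarrow> ('a \<Rightarrow> 'a \<Rightarrow> bool) \<Rightarrow> bool" where
  "connected_graph V E \<longleftrightarrow> (\<forall>x\<in>V. \<forall>y\<in>V. \<exists>k. walk V E k x y)"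

definition gdist :: "'a set \<Rightarrow> ('a \<Rightarrow> 'a \<Rightarrow> bool) \<Rightarrow> 'a \<Rightarrow> 'a \<Rightarrow> nat" where
  "gdist V E x y = (LEAST k. walk V E k x y)"

text \<open>rho(G) (meaningful for connected G); the weight of {x,y} is the distance of x and y
  (this does not depend on the order, as E is symmetric).\<close>
definition rhograph :: "'a set \<Rightarrow> ('a \<Rightarrow> 'a \<Rightarrow> bool) \<Rightarrow> 'a wgraph" where
  "rhograph V E = (V, \<lambda>e. if \<exists>x y. e = {x, y} \<and> x \<noteq> y
       then int (gdist V E (SOME x. x \<in> e) (SOME y. y \<in> e \<and> y \<noteq> (SOME x. x \<in> e))) else 0)"

definition star_V :: "nat \<Rightarrow> nat set" where "star_V n = {0..<n}"
definition star_E :: "nat \<Rightarrow> nat \<Rightarrow> nat \<Rightarrow> bool" where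
  "star_E n x y \<longleftrightarrow> x < n \<and> y < n \<and> x \<noteq> y \<and> (x = 0 \<or> y = 0)"

end

(*
  Let H be I(S_n) or rho(S_n) and let f be a bijection sending the centre of the star to a
  vertex v of G. Every 2-subset through the centre has H-weight 1 and every other one has
  weight c, with c = 0 for I(S_n) and c = 2 for rho(S_n). Hence
  s(H *_f I(G)) = c s(I(G)) + (1 - c) deg v, where s(I(G)) is the number of edges. As c is not 1,
  this is an injective function of deg v, and every vertex arises as the image of the centre,
  so the set of these sums is a singleton exactly when all vertex degrees agree.
*)
theory Submission
  imports Defs "HOL-Combinatorics.Transposition"
begin

lemma finite_two_subsets: "finite V \<Longrightarrow> finite (two_subsets V)"
  unfolding two_subsets_def by (rule finite_subset[of _ "Pow V"]) auto

lemma doubleton_in_two_subsets_iff: "{x, y} \<in> two_subsets V \<longleftrightarrow> x \<in> V \<and> y \<in> V \<and> x \<noteq> y"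
  unfolding two_subsets_def by (auto simp: card_2_iff doubleton_eq_iff)

lemma two_subsetsE:
  assumes "e \<in> two_subsets V"
  obtains x y where "e = {x, y}" "x \<noteq> y" "x \<in> V" "y \<in> V"
  using assms unfolding two_subsets_def by (auto simp: card_2_iff)

lemma bij_betw_image_two_subsets:
  assumes f: "bij_betw f A B"
  shows "bij_betw (image f) (two_subsets A) (two_subsets B)"
proof (rule bij_betw_subset[OF bij_betw_image_Pow[OF f]])
  show "two_subsets A \<subseteq> Pow A" unfolding two_subsets_def by blast
  have card_image_f: "card (f ` e) = card e" if "e \<subseteq> A" for e
    using that f by (meson bij_betw_imp_inj_on card_image inj_on_subset)
  show "image f ` two_subsets A = two_subsets B"
  proof (intro equalityI subsetI)
    fix e' assume "e' \<in> two_subsets B"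
    then have "e' \<subseteq> f ` A" "card e' = 2"
      using f unfolding two_subsets_def bij_betw_def by auto
    then obtain e where "e \<subseteq> A" "e' = f ` e"
      by (auto elim: subset_imageE)
    then show "e' \<in> image f ` two_subsets A"
      using card_image_f \<open>card e' = 2\<close> unfolding two_subsets_def by auto
  qed (use f card_image_f in \<open>auto simp: two_subsets_def bij_betw_def\<close>)
qed

lemma sum_two_subsets_reindex:
  assumes "bij_betw f A B"
  shows "(\<Sum>e\<in>two_subsets A. g (f ` e)) = (\<Sum>e\<in>two_subsets B. g e)"
  using sum.reindex_bij_betw[OF bij_betw_image_two_subsets[OF assms]] .

lemma bij_betw_with_prescribed_value:
  assumes "finite A" "card A = card B" "a \<in> A" "b \<in> B"
  obtains f where "bij_betw f A B" "f a = b"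
proof -
  obtain h where h: "bij_betw h A B"
    using assms card_gt_0_iff finite_same_card_bij by (metis empty_iff)
  define a' where "a' = inv_into A h b"
  have a': "a' \<in> A" "h a' = b"
    using h assms(4) unfolding a'_def
    by (auto simp: bij_betw_def inv_into_into f_inv_into_f)
  have "bij_betw (h \<circ> transpose a a') A B"
    using a' assms(3) h by (intro bij_betw_trans[of _ A]) auto
  moreover have "(h \<circ> transpose a a') a = b" using a' by simp
  ultimately show thesis using that by blast
qed

lemma wprod_singletons: "wprod {H} {G} = wprod_f H G ` {f. bij_betw f (fst H) (fst G)}"
  unfolding wprod_def by blast

lemma fst_Igraph [simp]: "fst (Igraph V E) = V"
  by (simp add: Igraph_def)

definition star_weights :: "'a wgraph \<Rightarrow> 'a \<Rightarrow> int \<Rightarrow> bool" where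
  "star_weights H a c \<longleftrightarrow> a \<in> fst H \<and>
     (\<forall>e\<in>two_subsets (fst H). snd H e = (if a \<in> e then 1 else c))"

lemma wsum_wprod_f_star_weights:
  assumes H: "star_weights H a c" and f: "bij_betw f (fst H) (fst G)"
  shows "wsum (wprod_f H G f)
           = c * wsum G + (1 - c) * (\<Sum>e\<in>two_subsets (fst G). if f a \<in> e then snd G e else 0)"
proof -
  have a_in_image_iff: "a \<in> e \<longleftrightarrow> f a \<in> f ` e" if "e \<in> two_subsets (fst H)" for e
    using that H inj_on_image_mem_iff[OF bij_betw_imp_inj_on[OF f]]
    unfolding star_weights_def two_subsets_def by blast
  have "wsum (wprod_f H G f) = (\<Sum>e\<in>two_subsets (fst H). snd H e * snd G (f ` e))"
    by (simp add: wsum_def wprod_f_def)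
  also have "\<dots> = (\<Sum>e\<in>two_subsets (fst H). (if f a \<in> f ` e then 1 else c) * snd G (f ` e))"
    using H a_in_image_iff unfolding star_weights_def by (intro sum.cong) auto
  also have "\<dots> = (\<Sum>e\<in>two_subsets (fst G). (if f a \<in> e then 1 else c) * snd G e)"
    using sum_two_subsets_reindex[OF f, of "\<lambda>e. (if f a \<in> e then 1 else c) * snd G e"] .
  also have "\<dots> = (\<Sum>e\<in>two_subsets (fst G). c * snd G e + (1 - c) * (if f a \<in> e then snd G e else 0))"
    by (intro sum.cong) (auto simp: algebra_simps)
  also have "\<dots> = c * wsum G + (1 - c) * (\<Sum>e\<in>two_subsets (fst G). if f a \<in> e then snd G e else 0)"
    by (simp add: wsum_def sum.distrib sum_distrib_left)
  finally show ?thesis .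
qed

lemma Igraph_weight_doubleton:
  assumes "simple_graph V E" "x \<noteq> y"
  shows "snd (Igraph V E) {x, y} = (if E x y then 1 else 0)"
  using assms unfolding Igraph_def simple_graph_def by (auto simp: doubleton_eq_iff)

lemma sum_Igraph_incident:
  assumes G: "simple_graph V E" and v: "v \<in> V"
  shows "(\<Sum>e\<in>two_subsets V. if v \<in> e then snd (Igraph V E) e else 0) = int (degree V E v)"
proof -
  have fin: "finite V" using G simple_graph_def by blast
  have bij: "bij_betw (\<lambda>u. {v, u}) (V - {v}) {e \<in> two_subsets V. v \<in> e}"
  proof (rule bij_betw_imageI)
    show "inj_on (\<lambda>u. {v, u}) (V - {v})"
      by (auto intro!: inj_onI simp: doubleton_eq_iff)
    show "(\<lambda>u. {v, u}) ` (V - {v}) = {e \<in> two_subsets V. v \<in> e}"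
    proof (intro equalityI subsetI)
      fix e assume "e \<in> {e \<in> two_subsets V. v \<in> e}"
      then obtain x y where "e = {x, y}" "x \<noteq> y" "x \<in> V" "y \<in> V" "v \<in> e"
        by (auto elim: two_subsetsE)
      then show "e \<in> (\<lambda>u. {v, u}) ` (V - {v})"
        by (auto simp: insert_commute)
    qed (use v in \<open>auto simp: doubleton_in_two_subsets_iff\<close>)
  qed
  have "(\<Sum>e\<in>two_subsets V. if v \<in> e then snd (Igraph V E) e else 0)
          = (\<Sum>e\<in>{e \<in> two_subsets V. v \<in> e}. snd (Igraph V E) e)"
    using finite_two_subsets[OF fin] by (simp add: sum.inter_filter)
  also have "\<dots> = (\<Sum>u\<in>V - {v}. snd (Igraph V E) {v, u})"
    using sum.reindex_bij_betw[OF bij] by metis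
  also have "\<dots> = (\<Sum>u\<in>V - {v}. if E v u then 1 else 0)"
    using G by (intro sum.cong) (auto simp: Igraph_weight_doubleton)
  also have "\<dots> = int (card {u \<in> V - {v}. E v u})"
    using fin by (simp add: sum.If_cases Int_def)
  also have "\<dots> = int (degree V E v)"
    using G unfolding simple_graph_def degree_def by (metis Diff_iff singletonD)
  finally show ?thesis .
qed

lemma wsum_wprod_f_star_weights_Igraph:
  assumes "star_weights H a c" "bij_betw f (fst H) V" "simple_graph V E"
  shows "wsum (wprod_f H (Igraph V E) f) = c * wsum (Igraph V E) + (1 - c) * int (degree V E (f a))"
proof -
  have "f a \<in> V"
    using assms(1,2) unfolding star_weights_def by (simp add: bij_betw_apply)
  then show ?thesis
    using assms wsum_wprod_f_star_weights[of H a c f "Igraph V E"]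
    by (simp add: Igraph_def sum_Igraph_incident)
qed

lemma wsum_image_wprod_star_weights_Igraph:
  assumes H: "star_weights H a c" and G: "simple_graph V E"
    and card_eq: "card (fst H) = card V" and V: "V \<noteq> {}"
  shows "wsum ` wprod {H} {Igraph V E}
           = (\<lambda>v. c * wsum (Igraph V E) + (1 - c) * int (degree V E v)) ` V"
proof -
  have fin: "finite (fst H)"
    using G card_eq V unfolding simple_graph_def by (metis card_gt_0_iff)
  let ?F = "{f. bij_betw f (fst H) V}"
  let ?\<phi> = "\<lambda>v. c * wsum (Igraph V E) + (1 - c) * int (degree V E v)"
  have centre_images: "(\<lambda>f. f a) ` ?F = V"
  proof
    show "(\<lambda>f. f a) ` ?F \<subseteq> V"
      using H unfolding star_weights_def by (auto simp: bij_betw_apply)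
    show "V \<subseteq> (\<lambda>f. f a) ` ?F"
    proof
      fix v assume "v \<in> V"
      then obtain f where "bij_betw f (fst H) V" "f a = v"
        using bij_betw_with_prescribed_value[OF fin card_eq] H unfolding star_weights_def by blast
      then show "v \<in> (\<lambda>f. f a) ` ?F" by force
    qed
  qed
  have "wsum ` wprod {H} {Igraph V E} = (\<lambda>f. wsum (wprod_f H (Igraph V E) f)) ` ?F"
    by (simp add: wprod_singletons image_image)
  also have "\<dots> = (\<lambda>f. ?\<phi> (f a)) ` ?F"
    using wsum_wprod_f_star_weights_Igraph[OF H _ G] by (intro image_cong) auto
  also have "\<dots> = ?\<phi> ` (\<lambda>f. f a) ` ?F"
    by (simp add: image_image)
  finally show ?thesis
    unfolding centre_images .
qed

lemma card_wsum_image_wprod_star_weights_Igraph_eq_1_iff: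
  assumes H: "star_weights H a c" and G: "simple_graph V E"
    and card_eq: "card (fst H) = card V" and V: "V \<noteq> {}" and c: "c \<noteq> 1"
  shows "card (wsum ` wprod {H} {Igraph V E}) = 1 \<longleftrightarrow> regular V E"
proof -
  let ?\<phi> = "\<lambda>k. c * wsum (Igraph V E) + (1 - c) * int k"
  have "inj ?\<phi>"
    using c by (intro injI) simp
  then have "card (?\<phi> ` degree V E ` V) = card (degree V E ` V)"
    by (rule card_image[OF inj_on_subset]) simp
  moreover have "?\<phi> ` degree V E ` V = wsum ` wprod {H} {Igraph V E}"
    unfolding wsum_image_wprod_star_weights_Igraph[OF H G card_eq V] by (rule image_image)
  ultimately have "card (wsum ` wprod {H} {Igraph V E}) = card (degree V E ` V)"
    by simp
  also have "\<dots> = 1 \<longleftrightarrow> (\<exists>k. degree V E ` V = {k})"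
    by (simp add: card_1_singleton_iff)
  also have "\<dots> \<longleftrightarrow> regular V E"
    using V unfolding regular_def by auto
  finally show ?thesis .
qed

lemma walk_0_imp_eq: "walk V E 0 x y \<Longrightarrow> x = y"
  unfolding walk_def
  by (metis hd_conv_nth last_conv_nth length_0_conv list.size(3) diff_Suc_1 nat.distinct(1))

lemma walk_1_imp_edge: "walk V E 1 x y \<Longrightarrow> E x y"
  unfolding walk_def
  by (metis One_nat_def diff_Suc_1 hd_conv_nth last_conv_nth lessI list.size(3) nat.distinct(1))

lemma walk_1_if_edge: "x \<in> V \<Longrightarrow> y \<in> V \<Longrightarrow> E x y \<Longrightarrow> walk V E 1 x y"
  unfolding walk_def by (intro exI[of _ "[x, y]"]) auto

lemma walk_2_if_edges:
  assumes "x \<in> V" "y \<in> V" "z \<in> V" "E x z" "E z y"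
  shows "walk V E 2 x y"
  unfolding walk_def
proof (intro exI[of _ "[x, z, y]"] conjI allI impI)
  fix i :: nat assume "i < 2"
  then consider "i = 0" | "i = 1" by linarith
  then show "E ([x, z, y] ! i) ([x, z, y] ! Suc i)"
    by cases (use assms in auto)
qed (use assms in auto)

lemma gdist_star:
  assumes "x < n" "y < n" "x \<noteq> y"
  shows "gdist (star_V n) (star_E n) x y = (if x = 0 \<or> y = 0 then 1 else 2)"
  unfolding gdist_def
proof (rule Least_equality)
  show "walk (star_V n) (star_E n) (if x = 0 \<or> y = 0 then 1 else 2) x y"
  proof (cases "x = 0 \<or> y = 0")
    case True
    then have "star_E n x y"
      using assms by (auto simp: star_E_def)
    then show ?thesis
      using True assms walk_1_if_edge[of x "star_V n" y] by (simp add: star_V_def)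
  next
    case False
    then show ?thesis
      using assms walk_2_if_edges[of x "star_V n" y 0] by (simp add: star_V_def star_E_def)
  qed
  fix k assume walk: "walk (star_V n) (star_E n) k x y"
  have "k \<noteq> 0"
    using walk walk_0_imp_eq[of "star_V n" "star_E n" x y] assms(3) by (cases k) auto
  moreover have "k = 1 \<Longrightarrow> x = 0 \<or> y = 0"
    using walk walk_1_imp_edge[of "star_V n" "star_E n" x y] unfolding star_E_def by simp
  ultimately show "(if x = 0 \<or> y = 0 then 1 else 2) \<le> k"
    by (cases "k = 1") auto
qed

lemma rhograph_weight_doubleton:
  assumes "x \<noteq> y"
  obtains u w where "{u, w} = {x, y}" "snd (rhograph V E) {x, y} = int (gdist V E u w)"
proof -
  define u where "u = (SOME u. u \<in> {x, y})"
  define w where "w = (SOME w. w \<in> {x, y} \<and> w \<noteq> u)"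
  have "u \<in> {x, y}"
    unfolding u_def by (rule someI[of _ x]) simp
  moreover have "w \<in> {x, y} \<and> w \<noteq> u"
    unfolding w_def by (rule someI_ex) (use \<open>u \<in> {x, y}\<close> assms in blast)
  ultimately have "{u, w} = {x, y}" by auto
  moreover have "snd (rhograph V E) {x, y} = int (gdist V E u w)"
  proof -
    have "\<exists>x' y'. {x, y} = {x', y'} \<and> x' \<noteq> y'"
      using assms by blast
    then show ?thesis
      unfolding rhograph_def u_def w_def by (simp only: snd_conv if_True)
  qed
  ultimately show thesis using that by blast
qed

lemma simple_graph_star: "simple_graph (star_V n) (star_E n)"
  unfolding simple_graph_def star_V_def star_E_def by auto

lemma star_weights_Igraph_star: "0 < n \<Longrightarrow> star_weights (Igraph (star_V n) (star_E n)) 0 0"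
  unfolding star_weights_def
proof (intro conjI ballI)
  fix e assume "e \<in> two_subsets (fst (Igraph (star_V n) (star_E n)))"
  then obtain x y where "e = {x, y}" "x \<noteq> y" "x < n" "y < n"
    by (auto simp: star_V_def elim: two_subsetsE)
  then show "snd (Igraph (star_V n) (star_E n)) e = (if 0 \<in> e then 1 else 0)"
    using Igraph_weight_doubleton[OF simple_graph_star] by (auto simp: star_E_def)
qed (simp add: star_V_def)

lemma star_weights_rhograph_star: "0 < n \<Longrightarrow> star_weights (rhograph (star_V n) (star_E n)) 0 2"
  unfolding star_weights_def
proof (intro conjI ballI)
  fix e assume "e \<in> two_subsets (fst (rhograph (star_V n) (star_E n)))"
  then obtain x y where e: "e = {x, y}" "x \<noteq> y" "x < n" "y < n"
    by (auto simp: rhograph_def star_V_def elim: two_subsetsE)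
  then obtain u w where uw: "{u, w} = {x, y}"
    and weight: "snd (rhograph (star_V n) (star_E n)) e = int (gdist (star_V n) (star_E n) u w)"
    using rhograph_weight_doubleton by metis
  show "snd (rhograph (star_V n) (star_E n)) e = (if 0 \<in> e then 1 else 2)"
    using weight uw e gdist_star[of u n w] by (auto simp: doubleton_eq_iff)
qed (simp add: rhograph_def star_V_def)

theorem mainTheorem17:
  fixes V :: "'a set" and E :: "'a \<Rightarrow> 'a \<Rightarrow> bool"
  assumes "simple_graph V E" and "card V \<ge> 2"
  shows "(regular V E \<longleftrightarrow>
            card (wsum ` wprod {Igraph (star_V (card V)) (star_E (card V))} {Igraph V E}) = 1)
       \<and> (regular V E \<longleftrightarrow>
            card (wsum ` wprod {rhograph (star_V (card V)) (star_E (card V))} {Igraph V E}) = 1)"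
proof -
  have "V \<noteq> {}" "0 < card V"
    using assms(2) by auto
  moreover have "card (fst (Igraph (star_V (card V)) (star_E (card V)))) = card V"
    and "card (fst (rhograph (star_V (card V)) (star_E (card V)))) = card V"
    by (simp_all add: Igraph_def rhograph_def star_V_def)
  ultimately show ?thesis
    using card_wsum_image_wprod_star_weights_Igraph_eq_1_iff[OF star_weights_Igraph_star assms(1)]
      card_wsum_image_wprod_star_weights_Igraph_eq_1_iff[OF star_weights_rhograph_star assms(1)]
    by simp
qed

end
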